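(* Let $G\subset\mathrm{Homeo}_+([0,1])$ be a group without linked fixed points. Then the set of pairs of successive fixed points of elements of $G$ is at most countable.
   Context: For a group $G$ of homeomorphisms of $[0,1]$, a pair of successive fixed points of $G$ is a pair $\{a,b\}$, $a<b$, such that $(a,b)$ is a connected component of $[0,1]\setminus \mathrm{Fix}(g)$ for some $g\in G$. Two pairs $\{a,b\}$ and $\{c,d\}$ are linked if $(a,b)\cap\{c,d\}$ or $(c,d)\cap\{a,b\}$ consists of exactly one point. $G$ is without linked fixed points if no two pairs of successive fixed points of $G$ are linked. *)

theory Defs
  imports "HOL-Analysis.Analysis"
begin

text \<open>Orientation-preserving homeomorphisms of [0,1], represented as functions
  real \<Rightarrow> real that are the identity outside [0,1] (so that composition
  and inverse are literal function operations).\<close>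
definition homeo_plus :: "(real \<Rightarrow> real) \<Rightarrow> bool" where
  "homeo_plus f \<longleftrightarrow>
     (\<exists>g. homeomorphism {0..1} {0..1} f g) \<and> mono_on {0..1} f \<and>
     (\<forall>x. x \<notin> {0..1} \<longrightarrow> f x = x)"

definition homeo_plus_group :: "(real \<Rightarrow> real) set \<Rightarrow> bool" where
  "homeo_plus_group G \<longleftrightarrow>
     (\<forall>f\<in>G. homeo_plus f) \<and> id \<in> G \<and>
     (\<forall>f\<in>G. \<forall>g\<in>G. f \<circ> g \<in> G) \<and>
     (\<forall>f\<in>G. inv f \<in> G)"

definition Fix :: "(real \<Rightarrow> real) \<Rightarrow> real set" where
  "Fix g = {x \<in> {0..1}. g x = x}"

definition succ_fixed_pairs :: "(real \<Rightarrow> real) set \<Rightarrow> (real \<times> real) set" where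
  "succ_fixed_pairs G =
     {(a, b). a < b \<and> (\<exists>g\<in>G. {a<..<b} \<in> components ({0..1} - Fix g))}"

definition linked :: "real \<times> real \<Rightarrow> real \<times> real \<Rightarrow> bool" where
  "linked p q \<longleftrightarrow> (case p of (a, b) \<Rightarrow> case q of (c, d) \<Rightarrow>
      card ({a<..<b} \<inter> {c, d}) = 1 \<or> card ({c<..<d} \<inter> {a, b}) = 1)"

definition without_linked_fixed_points :: "(real \<Rightarrow> real) set \<Rightarrow> bool" where
  "without_linked_fixed_points G \<longleftrightarrow>
     (\<forall>p\<in>succ_fixed_pairs G. \<forall>q\<in>succ_fixed_pairs G. \<not> linked p q)"

end

theory Submission
  imports Defs
begin

text \<open>Attach to each pair of successive fixed points (a, b), realised by g, a rational
  window (r, s) with a < r < s < b such that g maps some point of (r, s) into (r, s).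
  If a pair (c, d) lies strictly inside (a, b), then g has no fixed point on [c, d], so it
  moves c and d to the same side; as (g c, g d) is again a pair and is not linked with
  (c, d), g pushes [c, d] entirely off itself. So a window cannot serve two nested pairs,
  two unlinked pairs that are not nested are disjoint, and the window determines the pair.\<close>

lemma homeo_plus_continuous_on: "homeo_plus f \<Longrightarrow> continuous_on {0..1} f"
  unfolding homeo_plus_def homeomorphism_def by blast

lemma homeo_plus_outside: "homeo_plus f \<Longrightarrow> x \<notin> {0..1} \<Longrightarrow> f x = x"
  unfolding homeo_plus_def by blast

lemma homeo_plus_bij: assumes "homeo_plus f" shows "bij f"
proof -
  obtain g where "homeomorphism {0..1} {0..1} f g"
    using assms unfolding homeo_plus_def by blast
  then have "bij_betw f {0..1} {0..1}"
    by (intro bij_betw_byWitness[of _ g]) (auto simp: homeomorphism_def)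
  moreover have "bij_betw f (- {0..1}) (- {0..1})"
    using bij_betw_cong[of "- {0..1}" f id] homeo_plus_outside[OF assms] by simp
  ultimately show ?thesis
    using bij_betw_combine[of f "{0..1}" "{0..1}" "- {0..1}" "- {0..1}"] by simp
qed

lemma homeo_plus_strict_mono_on: assumes "homeo_plus f" shows "strict_mono_on {0..1} f"
proof (rule strict_mono_onI)
  fix x y :: real assume "x \<in> {0..1}" "y \<in> {0..1}" "x < y"
  moreover have "f x \<noteq> f y"
    using bij_is_inj[OF homeo_plus_bij[OF assms]] \<open>x < y\<close> by (metis inj_eq less_irrefl)
  moreover have "f x \<le> f y"
    using assms \<open>x \<in> {0..1}\<close> \<open>y \<in> {0..1}\<close> \<open>x < y\<close> unfolding homeo_plus_def by (auto intro: mono_onD)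
  ultimately show "f x < f y" by simp
qed

lemma homeo_plus_inv_in_unit_interval:
  assumes "homeo_plus f" "y \<in> {0..1}" shows "inv f y \<in> {0..1}"
proof (rule ccontr)
  assume "inv f y \<notin> {0..1}"
  moreover have "f (inv f y) = y"
    using homeo_plus_bij[OF assms(1)] by (simp add: bij_is_surj surj_f_inv_f)
  ultimately show False using assms homeo_plus_outside[of f "inv f y"] by simp
qed

lemma fixpoint_free_same_side:
  fixes f :: "real \<Rightarrow> real"
  assumes "c \<le> d" "continuous_on {c..d} f" "\<And>x. x \<in> {c..d} \<Longrightarrow> f x \<noteq> x"
  shows "f c < c \<longleftrightarrow> f d < d"
proof -
  have "continuous_on {c..d} (\<lambda>x. f x - x)"
    by (intro continuous_intros assms(2))
  then have "\<exists>x. c \<le> x \<and> x \<le> d \<and> f x - x = 0" if "(f c - c) * (f d - d) < 0"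
    using IVT'[of "\<lambda>x. f x - x" c 0 d] IVT2'[of "\<lambda>x. f x - x" d 0 c] assms(1) that
    by (auto simp: mult_less_0_iff)
  moreover have "f c \<noteq> c" "f d \<noteq> d" using assms by auto
  ultimately show ?thesis using assms(3) by (fastforce simp: mult_less_0_iff)
qed

lemma interval_in_components_iff:
  fixes S F :: "real set"
  assumes "closed S" "c < d"
  shows "{c<..<d} \<in> components (S - F) \<longleftrightarrow> {c<..<d} \<subseteq> S - F \<and> c \<in> F \<and> d \<in> F"
proof
  assume comp: "{c<..<d} \<in> components (S - F)"
  then have sub: "{c<..<d} \<subseteq> S - F"
    and maximal: "\<And>D. {c<..<d} \<subseteq> D \<Longrightarrow> D \<subseteq> S - F \<Longrightarrow> connected D \<Longrightarrow> D = {c<..<d}"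
    unfolding in_components_maximal by blast+
  have "{c..d} \<subseteq> S"
    using closure_minimal[of "{c<..<d}" S] sub assms by auto
  have "c \<in> F"
  proof (rule ccontr)
    assume "c \<notin> F"
    then have "{c..<d} \<subseteq> S - F" using sub \<open>{c..d} \<subseteq> S\<close> by (auto simp: less_le)
    then have "{c..<d} = {c<..<d}" by (intro maximal) auto
    then show False using assms(2) by (metis atLeastLessThan_iff greaterThanLessThan_iff order_refl less_irrefl)
  qed
  moreover have "d \<in> F"
  proof (rule ccontr)
    assume "d \<notin> F"
    then have "{c<..d} \<subseteq> S - F" using sub \<open>{c..d} \<subseteq> S\<close> by (auto simp: less_le)
    then have "{c<..d} = {c<..<d}" by (intro maximal) auto
    then show False using assms(2) by (metis greaterThanAtMost_iff greaterThanLessThan_iff order_refl less_irrefl)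
  qed
  ultimately show "{c<..<d} \<subseteq> S - F \<and> c \<in> F \<and> d \<in> F" using sub by blast
next
  assume R: "{c<..<d} \<subseteq> S - F \<and> c \<in> F \<and> d \<in> F"
  have "D \<subseteq> {c<..<d}" if "{c<..<d} \<subseteq> D" "D \<subseteq> S - F" "connected D" for D
  proof
    fix y assume "y \<in> D"
    have mid: "(c + d) / 2 \<in> D" using that(1) assms(2) by auto
    have "c \<notin> D" "d \<notin> D" using R that(2) by auto
    moreover have "c \<in> D" if "y \<le> c"
      using connected_contains_Icc[OF \<open>connected D\<close> \<open>y \<in> D\<close> mid] that assms(2) by auto
    moreover have "d \<in> D" if "d \<le> y"
      using connected_contains_Icc[OF \<open>connected D\<close> mid \<open>y \<in> D\<close>] that assms(2) by auto
    ultimately show "y \<in> {c<..<d}" by force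
  qed
  then show "{c<..<d} \<in> components (S - F)"
    using R assms(2) unfolding in_components_maximal by auto
qed

lemma homeo_plus_group_member: "homeo_plus_group G \<Longrightarrow> g \<in> G \<Longrightarrow> homeo_plus g"
  unfolding homeo_plus_group_def by blast

lemma succ_fixed_pairs_iff:
  "(a, b) \<in> succ_fixed_pairs G \<longleftrightarrow>
     a < b \<and> (\<exists>g\<in>G. {a<..<b} \<subseteq> {0..1} - Fix g \<and> a \<in> Fix g \<and> b \<in> Fix g)"
  using interval_in_components_iff[OF closed_atLeastAtMost, of a b 0 1]
  unfolding succ_fixed_pairs_def by blast

lemma succ_fixed_pairs_image:
  assumes G: "homeo_plus_group G" and g: "g \<in> G" and cd: "(c, d) \<in> succ_fixed_pairs G"
  shows "(g c, g d) \<in> succ_fixed_pairs G"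
proof -
  obtain h where "c < d" "h \<in> G" and free: "{c<..<d} \<subseteq> {0..1} - Fix h"
    and "c \<in> Fix h" "d \<in> Fix h"
    using cd unfolding succ_fixed_pairs_iff by blast
  have hg: "homeo_plus g" using G g by (rule homeo_plus_group_member)
  have inj: "inj g" and surj: "surj g" using homeo_plus_bij[OF hg] by (auto dest: bij_is_inj bij_is_surj)
  have mono: "strict_mono_on {0..1} g" using hg by (rule homeo_plus_strict_mono_on)
  have unit: "\<And>x. x \<in> {0..1} \<Longrightarrow> g x \<in> {0..1}"
    using hg unfolding homeo_plus_def homeomorphism_def by blast
  define k where "k = g \<circ> (h \<circ> inv g)"
  have "k \<in> G" using G g \<open>h \<in> G\<close> unfolding k_def homeo_plus_group_def by blast
  have Fix_k: "g z \<in> Fix k \<longleftrightarrow> z \<in> Fix h" if "z \<in> {0..1}" for z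
    using that unit inv_f_f[OF inj] inj_eq[OF inj] unfolding Fix_def k_def by auto
  have c01: "c \<in> {0..1}" and d01: "d \<in> {0..1}" using \<open>c \<in> Fix h\<close> \<open>d \<in> Fix h\<close> by (auto simp: Fix_def)
  have "{g c<..<g d} \<subseteq> {0..1} - Fix k"
  proof
    fix y assume y: "y \<in> {g c<..<g d}"
    then have "y \<in> {0..1}" using unit[OF c01] unit[OF d01] by auto
    define z where "z = inv g y"
    have gz: "g z = y" unfolding z_def using surj_f_inv_f[OF surj] .
    have z01: "z \<in> {0..1}" unfolding z_def using homeo_plus_inv_in_unit_interval[OF hg \<open>y \<in> {0..1}\<close>] .
    have "z \<in> {c<..<d}"
      using y strict_mono_on_less[OF mono] z01 c01 d01 unfolding gz[symmetric] by auto
    then show "y \<in> {0..1} - Fix k"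
      using free Fix_k[OF z01] \<open>y \<in> {0..1}\<close> gz by auto
  qed
  moreover have "g c < g d" using strict_mono_on_less[OF mono c01 d01] \<open>c < d\<close> by simp
  ultimately show ?thesis
    unfolding succ_fixed_pairs_iff
    using \<open>k \<in> G\<close> Fix_k[OF c01] Fix_k[OF d01] \<open>c \<in> Fix h\<close> \<open>d \<in> Fix h\<close> by blast
qed

lemma unlinked_iff:
  assumes "a < b" "c < d"
  shows "\<not> linked (a, b) (c, d) \<longleftrightarrow>
    (c \<in> {a<..<b} \<longleftrightarrow> d \<in> {a<..<b}) \<and> (a \<in> {c<..<d} \<longleftrightarrow> b \<in> {c<..<d})"
proof -
  have "card (S \<inter> {x, y}) = 1 \<longleftrightarrow> (x \<in> S) \<noteq> (y \<in> S)" if "x \<noteq> y" for S and x y :: real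
    using that by (cases "x \<in> S"; cases "y \<in> S") (auto simp: Int_insert_right)
  then show ?thesis using assms unfolding linked_def by auto
qed

lemma nested_pair_displaced:
  assumes G: "homeo_plus_group G" and W: "without_linked_fixed_points G"
    and g: "g \<in> G" and ab: "{a<..<b} \<in> components ({0..1} - Fix g)"
    and cd: "(c, d) \<in> succ_fixed_pairs G" and "a < c" "d < b"
  shows "d \<le> g c \<or> g d \<le> c"
proof -
  have hg: "homeo_plus g" using G g by (rule homeo_plus_group_member)
  have "c < d" using cd unfolding succ_fixed_pairs_def by blast
  have "a < b" using \<open>a < c\<close> \<open>c < d\<close> \<open>d < b\<close> by linarith
  then have free: "{a<..<b} \<subseteq> {0..1} - Fix g"
    using ab interval_in_components_iff[OF closed_atLeastAtMost] by blast
  have moved: "g x \<noteq> x" if "x \<in> {c..d}" for x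
  proof -
    have "x \<in> {a<..<b}" using that \<open>a < c\<close> \<open>d < b\<close> by auto
    then show ?thesis using free by (auto simp: Fix_def)
  qed
  have "{c..d} \<subseteq> {a<..<b}" using \<open>a < c\<close> \<open>d < b\<close> by auto
  then have "{c..d} \<subseteq> {0..1}" using free by blast
  then have same_side: "g c < c \<longleftrightarrow> g d < d"
    using fixpoint_free_same_side[OF _ continuous_on_subset[OF homeo_plus_continuous_on[OF hg]] moved]
      \<open>c < d\<close> by simp
  have "(g c, g d) \<in> succ_fixed_pairs G" using succ_fixed_pairs_image[OF G g cd] .
  then have "\<not> linked (c, d) (g c, g d)"
    using W cd unfolding without_linked_fixed_points_def by blast
  moreover have "g c < g d"
    using strict_mono_on_less[OF homeo_plus_strict_mono_on[OF hg]] \<open>c < d\<close> \<open>{c..d} \<subseteq> {0..1}\<close> by auto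
  ultimately have inside: "g c \<in> {c<..<d} \<longleftrightarrow> g d \<in> {c<..<d}"
    using unlinked_iff \<open>c < d\<close> by blast
  have "g c \<noteq> c" "g d \<noteq> d" using moved \<open>c < d\<close> by auto
  then show ?thesis
  proof (cases "g c < c")
    case True
    then have "g d < d" using same_side by simp
    then show ?thesis using inside True by auto
  next
    case False
    then have "c < g c" "d < g d" using same_side \<open>g c \<noteq> c\<close> \<open>g d \<noteq> d\<close> by auto
    then show ?thesis using inside by auto
  qed
qed

definition returning_window :: "(real \<Rightarrow> real) set \<Rightarrow> real \<Rightarrow> real \<Rightarrow> real \<times> real \<Rightarrow> bool" where
  "returning_window G r s p \<longleftrightarrow> fst p < r \<and> s < snd p \<and>
     (\<exists>g\<in>G. {fst p<..<snd p} \<in> components ({0..1} - Fix g) \<and> (\<exists>x\<in>{r<..<s}. g x \<in> {r<..<s}))"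

lemma returning_window_imp_succ_fixed_pair:
  "returning_window G r s (a, b) \<Longrightarrow> (a, b) \<in> succ_fixed_pairs G"
  unfolding returning_window_def succ_fixed_pairs_def by auto

lemma returning_window_not_nested:
  assumes G: "homeo_plus_group G" and W: "without_linked_fixed_points G"
    and outer: "returning_window G r s (a, b)" and inner: "returning_window G r s (c, d)"
    and "a < c" "d < b"
  shows False
proof -
  obtain g x where g: "g \<in> G" "{a<..<b} \<in> components ({0..1} - Fix g)"
    and x: "x \<in> {r<..<s}" "g x \<in> {r<..<s}"
    using outer unfolding returning_window_def by auto
  have "c < r" "s < d" using inner unfolding returning_window_def by auto
  have hg: "homeo_plus g" using G g(1) by (rule homeo_plus_group_member)
  have "{c..d} \<subseteq> {0..1}"
    using returning_window_imp_succ_fixed_pair[OF inner] by (auto simp: succ_fixed_pairs_iff Fix_def)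
  then have "g c < g x" "g x < g d"
    using strict_mono_on_less[OF homeo_plus_strict_mono_on[OF hg]] x(1) \<open>c < r\<close> \<open>s < d\<close> by auto
  then show False
    using nested_pair_displaced[OF G W g returning_window_imp_succ_fixed_pair[OF inner] \<open>a < c\<close> \<open>d < b\<close>]
      x(2) \<open>c < r\<close> \<open>s < d\<close> by auto
qed

lemma returning_window_unique:
  assumes G: "homeo_plus_group G" and W: "without_linked_fixed_points G"
    and p: "returning_window G r s p" and q: "returning_window G r s q"
  shows "p = q"
proof -
  obtain a b c d where [simp]: "p = (a, b)" "q = (c, d)" by fastforce
  have "a < r" "s < b" "c < r" "s < d" "r < s"
    using p q unfolding returning_window_def by auto
  have "\<not> linked (a, b) (c, d)"
    using W p q returning_window_imp_succ_fixed_pair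
    unfolding without_linked_fixed_points_def by simp
  then have cd: "c \<in> {a<..<b} \<longleftrightarrow> d \<in> {a<..<b}" and ab: "a \<in> {c<..<d} \<longleftrightarrow> b \<in> {c<..<d}"
    using unlinked_iff \<open>a < r\<close> \<open>s < b\<close> \<open>c < r\<close> \<open>s < d\<close> \<open>r < s\<close> by simp_all
  consider "a < c" | "c < a" | "a = c" by linarith
  then show ?thesis
  proof cases
    case 1
    then have "d < b" using cd \<open>c < r\<close> \<open>r < s\<close> \<open>s < b\<close> \<open>s < d\<close> by auto
    then show ?thesis using returning_window_not_nested[OF G W] p q 1 by auto
  next
    case 2
    then have "b < d" using ab \<open>a < r\<close> \<open>r < s\<close> \<open>s < d\<close> \<open>s < b\<close> by auto
    then show ?thesis using returning_window_not_nested[OF G W] p q 2 by auto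
  next
    case 3
    then have "\<not> b < d" "\<not> d < b"
      using cd ab \<open>a < r\<close> \<open>r < s\<close> \<open>s < d\<close> \<open>s < b\<close> by auto
    then show ?thesis using 3 by simp
  qed
qed

lemma countable_returning_windows:
  assumes "homeo_plus_group G" "without_linked_fixed_points G"
  shows "countable {p. returning_window G r s p}"
proof -
  have "q = (SOME p. returning_window G r s p)" if "returning_window G r s q" for q
    using that someI[of "returning_window G r s" q] returning_window_unique[OF assms] by blast
  then have "{p. returning_window G r s p} \<subseteq> {SOME p. returning_window G r s p}" by blast
  then show ?thesis by (rule countable_subset) simp
qed

lemma exists_rational_returning_window:
  assumes G: "homeo_plus_group G" and p: "(a, b) \<in> succ_fixed_pairs G"
  shows "\<exists>r\<in>\<rat>. \<exists>s\<in>\<rat>. returning_window G r s (a, b)"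
proof -
  obtain g where "a < b" "g \<in> G" and comp: "{a<..<b} \<in> components ({0..1} - Fix g)"
    using p unfolding succ_fixed_pairs_def by blast
  then have "a \<in> Fix g" "b \<in> Fix g"
    using interval_in_components_iff[OF closed_atLeastAtMost] by blast+
  then have "g a = a" "g b = b" "a \<in> {0..1}" "b \<in> {0..1}" by (auto simp: Fix_def)
  have mono: "strict_mono_on {0..1} g"
    using G \<open>g \<in> G\<close> by (intro homeo_plus_strict_mono_on homeo_plus_group_member)
  define m where "m = (a + b) / 2"
  have "a < m" "m < b" using \<open>a < b\<close> unfolding m_def by auto
  then have "m \<in> {0..1}" using \<open>a \<in> {0..1}\<close> \<open>b \<in> {0..1}\<close> by auto
  have "a < g m" "g m < b"
    using strict_mono_on_less[OF mono \<open>a \<in> {0..1}\<close> \<open>m \<in> {0..1}\<close>]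
      strict_mono_on_less[OF mono \<open>m \<in> {0..1}\<close> \<open>b \<in> {0..1}\<close>]
      \<open>a < m\<close> \<open>m < b\<close> \<open>g a = a\<close> \<open>g b = b\<close> by simp_all
  obtain r where "r \<in> \<rat>" "a < r" "r < min m (g m)"
    using Rats_dense_in_real[of a "min m (g m)"] \<open>a < m\<close> \<open>a < g m\<close> by auto
  moreover obtain s where "s \<in> \<rat>" "max m (g m) < s" "s < b"
    using Rats_dense_in_real[of "max m (g m)" b] \<open>m < b\<close> \<open>g m < b\<close> by auto
  moreover have "m \<in> {r<..<s}" "g m \<in> {r<..<s}" using calculation by auto
  ultimately have "returning_window G r s (a, b)"
    unfolding returning_window_def using \<open>g \<in> G\<close> comp by (auto intro!: bexI[of _ g])
  then show ?thesis using \<open>r \<in> \<rat>\<close> \<open>s \<in> \<rat>\<close> by blast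
qed

theorem propositionp:
  fixes G :: "(real \<Rightarrow> real) set"
  assumes "homeo_plus_group G"
    and "without_linked_fixed_points G"
  shows "countable (succ_fixed_pairs G)"
proof (rule countable_subset)
  show "succ_fixed_pairs G \<subseteq> (\<Union>(r, s)\<in>\<rat> \<times> \<rat>. {p. returning_window G r s p})"
    using exists_rational_returning_window[OF assms(1)] by fastforce
  show "countable (\<Union>(r, s)\<in>\<rat> \<times> \<rat>. {p. returning_window G r s p})"
    using countable_returning_windows[OF assms] by (auto intro!: countable_UN simp: countable_rat)
qed

end
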